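(* Let $0<\eta<1$, $0<\alpha<\frac1\eta$, $0<\beta<\frac{1-\alpha\eta}{1-\eta}$ and $\theta\in(0,\tfrac12)$. Set $$k_1=1+\frac{\max\{\alpha,\beta\}}{(1-\alpha\eta)-\beta(1-\eta)},\qquad k_2=\theta\left[1+\frac{\beta+\min\{(\alpha-\beta)\theta,(\alpha-\beta)(1-\theta)\}}{(1-\alpha\eta)-\beta(1-\eta)}\right],\qquad \gamma=\frac{k_2}{k_1}.$$ If $y\in C([0,1])$ and $y\ge 0$, then the unique solution $u$ of the boundary value problem $$u''(t)+y(t)=0,\quad t\in[0,1],\qquad u(0)=\beta u(\eta),\quad u(1)=\alpha u(\eta)$$ satisfies $$\min_{\theta\le t\le 1-\theta} u(t)\ge \gamma\,\|u\|_1,\qquad\text{where } \|u\|_1=\sup\{|u(t)|: 0\le t\le 1\}.$$ *)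

theory Defs
  imports "HOL-Analysis.Analysis"
begin

definition k1 :: "real \<Rightarrow> real \<Rightarrow> real \<Rightarrow> real" where
  "k1 \<eta> \<alpha> \<beta> = 1 + max \<alpha> \<beta> / ((1 - \<alpha> * \<eta>) - \<beta> * (1 - \<eta>))"

definition k2 :: "real \<Rightarrow> real \<Rightarrow> real \<Rightarrow> real \<Rightarrow> real" where
  "k2 \<eta> \<alpha> \<beta> \<theta> = \<theta> * (1 + (\<beta> + min ((\<alpha> - \<beta>) * \<theta>) ((\<alpha> - \<beta>) * (1 - \<theta>)))
      / ((1 - \<alpha> * \<eta>) - \<beta> * (1 - \<eta>)))"

definition gamma :: "real \<Rightarrow> real \<Rightarrow> real \<Rightarrow> real \<Rightarrow> real" where
  "gamma \<eta> \<alpha> \<beta> \<theta> = k2 \<eta> \<alpha> \<beta> \<theta> / k1 \<eta> \<alpha> \<beta>"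

definition norm1 :: "(real \<Rightarrow> real) \<Rightarrow> real" where
  "norm1 u = Sup ((\<lambda>t. \<bar>u t\<bar>) ` {0..1})"

end

theory Submission
  imports Defs
begin

text \<open>Since \<open>u'' = -y \<le> 0\<close>, the solution \<open>u\<close> is concave on \<open>[0,1]\<close>. Concavity at \<open>\<eta>\<close> together
  with the boundary conditions gives \<open>((1 - \<alpha>\<eta>) - \<beta>(1 - \<eta>)) u(\<eta>) \<ge> 0\<close>, hence \<open>u(\<eta>) \<ge> 0\<close> and
  \<open>u \<ge> 0\<close> everywhere. For a nonnegative concave function, comparing \<open>u(t)\<close> with the chord through
  \<open>u(s)\<close> and an endpoint gives \<open>u(t) \<ge> min t (1 - t) \<cdot> u(s)\<close>, so \<open>u \<ge> \<theta> \<parallel>u\<parallel>\<^sub>1\<close> on \<open>[\<theta>, 1 - \<theta>]\<close>.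
  Finally \<open>\<gamma> \<le> \<theta>\<close>: the numerator \<open>\<beta> + min ((\<alpha> - \<beta>)\<theta>) ((\<alpha> - \<beta>)(1 - \<theta>))\<close> in \<open>k\<^sub>2\<close> is at most
  the numerator \<open>max \<alpha> \<beta>\<close> in \<open>k\<^sub>1\<close>, so \<open>k\<^sub>2 \<le> \<theta> k\<^sub>1\<close>.\<close>

lemma MVT_within_Icc:
  fixes f f' :: "real \<Rightarrow> real"
  assumes "a < b"
    and "\<forall>x\<in>{a..b}. (f has_real_derivative f' x) (at x within {a..b})"
  shows "\<exists>z\<in>{a<..<b}. f b - f a = (b - a) * f' z"
  using mvt_simple[of a b f "\<lambda>x. (*) (f' x)"] assms
  by (auto simp: has_field_derivative_def mult.commute)

lemma MVT_within_Icc_subinterval: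
  fixes f f' :: "real \<Rightarrow> real"
  assumes "\<forall>x\<in>{a..b}. (f has_real_derivative f' x) (at x within {a..b})"
    and "a \<le> p" "p < q" "q \<le> b"
  shows "\<exists>z\<in>{p<..<q}. f q - f p = (q - p) * f' z"
proof (rule MVT_within_Icc)
  show "\<forall>x\<in>{p..q}. (f has_real_derivative f' x) (at x within {p..q})"
    using assms by (auto intro: has_field_derivative_subset[where s = "{a..b}"])
qed (use assms in auto)

lemma antimono_on_if_derivative_nonpos:
  fixes g g' :: "real \<Rightarrow> real"
  assumes "\<forall>x\<in>{a..b}. (g has_real_derivative g' x) (at x within {a..b})"
    and "\<forall>x\<in>{a..b}. g' x \<le> 0"
  shows "antimono_on {a..b} g"
proof (rule monotone_onI)
  fix p q assume pq: "p \<in> {a..b}" "q \<in> {a..b}" "p \<le> q"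
  show "g q \<le> g p"
  proof (cases "p = q")
    case False
    then obtain z where z: "z \<in> {p<..<q}" "g q - g p = (q - p) * g' z"
      using MVT_within_Icc_subinterval[OF assms(1), of p q] pq by auto
    have "(q - p) * g' z \<le> 0"
      using z(1) pq assms(2) by (intro mult_nonneg_nonpos) auto
    then show ?thesis using z(2) by linarith
  qed simp
qed

lemma concave_on_if_antimono_derivative:
  fixes f f' :: "real \<Rightarrow> real"
  assumes der: "\<forall>x\<in>{a..b}. (f has_real_derivative f' x) (at x within {a..b})"
    and anti: "antimono_on {a..b} f'"
  shows "concave_on {a..b} f"
proof (rule concave_on_linorderI)
  fix t x y :: real
  assume t: "0 < t" "t < 1" and xy: "x \<in> {a..b}" "y \<in> {a..b}" "x < y"
  define z where "z = (1 - t) * x + t * y"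
  have zx: "z - x = t * (y - x)" and yz: "y - z = (1 - t) * (y - x)"
    by (simp_all add: z_def algebra_simps)
  have "0 < t * (y - x)" "0 < (1 - t) * (y - x)"
    using t xy(3) by simp_all
  then have xz: "x < z" and zy: "z < y"
    unfolding atomize_conj using zx yz by linarith
  obtain c1 where c1: "c1 \<in> {x<..<z}" "f z - f x = (z - x) * f' c1"
    using MVT_within_Icc_subinterval[OF der, of x z] xy xz zy by auto
  obtain c2 where c2: "c2 \<in> {z<..<y}" "f y - f z = (y - z) * f' c2"
    using MVT_within_Icc_subinterval[OF der, of z y] xy xz zy by auto
  have "f' c2 \<le> f' c1"
    using anti c1(1) c2(1) xy by (auto elim!: monotone_onD)
  then have "t * (1 - t) * (y - x) * f' c2 \<le> t * (1 - t) * (y - x) * f' c1"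
    using t xy(3) by (intro mult_left_mono) auto
  moreover have "f z - ((1 - t) * f x + t * f y) = (1 - t) * (f z - f x) - t * (f y - f z)"
    by (simp add: algebra_simps)
  moreover have "(1 - t) * (f z - f x) - t * (f y - f z)
      = t * (1 - t) * (y - x) * f' c1 - t * (1 - t) * (y - x) * f' c2"
    by (simp only: c1(2) c2(2) zx yz) (simp add: algebra_simps)
  ultimately show "(1 - t) * f x + t * f y \<le> f ((1 - t) *\<^sub>R x + t *\<^sub>R y)"
    by (simp add: z_def)
qed simp

lemma concave_on_chord:
  fixes f :: "real \<Rightarrow> real"
  assumes "concave_on S f" "a \<in> S" "b \<in> S" "a \<le> x" "x \<le> b"
  shows "(b - x) * f a + (x - a) * f b \<le> (b - a) * f x"
proof (cases "a = b")
  case False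
  define t where "t = (x - a) / (b - a)"
  have tb: "t * (b - a) = x - a"
    using False by (simp add: t_def)
  have "(1 - t) * a + t * b = a + t * (b - a)"
    by (simp add: algebra_simps)
  then have x: "x = (1 - t) *\<^sub>R a + t *\<^sub>R b"
    using tb by simp
  have t: "0 \<le> t" "t \<le> 1"
    using assms(4,5) False by (simp_all add: t_def divide_le_eq_1)
  have "(1 - t) * f a + t * f b \<le> f x"
    using concave_onD[OF assms(1) t assms(2,3)] x by simp
  then have "(b - a) * ((1 - t) * f a + t * f b) \<le> (b - a) * f x"
    using assms(4,5) by (intro mult_left_mono) auto
  moreover have "(b - a) * ((1 - t) * f a + t * f b) = (b - a - t * (b - a)) * f a + t * (b - a) * f b"
    by (simp add: algebra_simps)
  ultimately show ?thesis
    unfolding tb by simp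
qed (use assms in simp)

lemma concave_on_bvp_nonneg:
  fixes u :: "real \<Rightarrow> real"
  assumes conc: "concave_on {0..1} u"
    and bc: "u 0 = \<beta> * u \<eta>" "u 1 = \<alpha> * u \<eta>"
    and "0 \<le> \<alpha>" "0 \<le> \<beta>" "0 < \<eta>" "\<eta> < 1"
    and D_pos: "0 < (1 - \<alpha> * \<eta>) - \<beta> * (1 - \<eta>)"
  shows "\<forall>t\<in>{0..1}. 0 \<le> u t"
proof
  have "(1 - \<eta>) * u 0 + \<eta> * u 1 \<le> u \<eta>"
    using concave_on_chord[OF conc, of 0 1 \<eta>] assms(6,7) by simp
  then have "0 \<le> ((1 - \<alpha> * \<eta>) - \<beta> * (1 - \<eta>)) * u \<eta>"
    unfolding bc by (simp add: algebra_simps)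
  then have "0 \<le> u \<eta>"
    using D_pos by (simp add: zero_le_mult_iff)
  then have "0 \<le> min (u 0) (u 1)"
    unfolding bc using assms(4,5) by simp
  fix t :: real assume "t \<in> {0..1}"
  with \<open>0 \<le> min (u 0) (u 1)\<close> show "0 \<le> u t"
    using concave_on_ge_min[OF conc] by fastforce
qed

lemma concave_nonneg_min_dist_mult_le:
  fixes f :: "real \<Rightarrow> real"
  assumes conc: "concave_on {0..1} f" and nonneg: "\<forall>x\<in>{0..1}. 0 \<le> f x"
    and t: "t \<in> {0..1}" and s: "s \<in> {0..1}"
  shows "min t (1 - t) * f s \<le> f t"
proof -
  consider "s < t" | "t < s" | "s = t" by linarith
  then show ?thesis
  proof cases
    case 1
    have "(1 - t) * f s + (t - s) * f 1 \<le> (1 - s) * f t"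
      using concave_on_chord[OF conc, of s 1 t] 1 s t by auto
    moreover have "0 \<le> (t - s) * f 1" "s * f t \<ge> 0"
      using 1 s t nonneg by auto
    moreover have "min t (1 - t) * f s \<le> (1 - t) * f s"
      using s nonneg by (intro mult_right_mono) auto
    ultimately show ?thesis by (simp add: algebra_simps)
  next
    case 2
    have "(s - t) * f 0 + t * f s \<le> s * f t"
      using concave_on_chord[OF conc, of 0 s t] 2 s t by auto
    moreover have "0 \<le> (s - t) * f 0" "(1 - s) * f t \<ge> 0"
      using 2 s t nonneg by auto
    moreover have "min t (1 - t) * f s \<le> t * f s"
      using s nonneg by (intro mult_right_mono) auto
    ultimately show ?thesis by (simp add: algebra_simps)
  next
    case 3
    have "min t (1 - t) * f t \<le> 1 * f t"
      using t nonneg by (intro mult_right_mono) auto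
    then show ?thesis using 3 by simp
  qed
qed

lemma norm1_le:
  assumes "\<forall>s\<in>{0..1}. \<bar>u s\<bar> \<le> M"
  shows "norm1 u \<le> M"
  unfolding norm1_def using assms by (intro cSup_least) auto

lemma norm1_nonneg:
  assumes "continuous_on {0..1} u"
  shows "0 \<le> norm1 u"
proof -
  have "compact ((\<lambda>t. \<bar>u t\<bar>) ` {0..1})"
    using assms by (intro compact_continuous_image continuous_on_rabs) auto
  then have "bdd_above ((\<lambda>t. \<bar>u t\<bar>) ` {0..1})"
    by (intro bounded_imp_bdd_above compact_imp_bounded)
  then show ?thesis
    unfolding norm1_def by (intro cSup_upper2[of "\<bar>u 0\<bar>"]) auto
qed

lemma concave_nonneg_Inf_middle_ge_norm1:
  fixes u :: "real \<Rightarrow> real"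
  assumes conc: "concave_on {0..1} u" and nonneg: "\<forall>x\<in>{0..1}. 0 \<le> u x"
    and \<theta>: "0 < \<theta>" "\<theta> \<le> 1 / 2"
  shows "\<theta> * norm1 u \<le> Inf (u ` {\<theta>..1 - \<theta>})"
proof (rule cInf_greatest)
  show "u ` {\<theta>..1 - \<theta>} \<noteq> {}" using \<theta> by auto
next
  fix v assume "v \<in> u ` {\<theta>..1 - \<theta>}"
  then obtain t where t: "t \<in> {\<theta>..1 - \<theta>}" "v = u t" by auto
  have "\<theta> * u s \<le> u t" if s: "s \<in> {0..1}" for s
  proof -
    have "\<theta> * u s \<le> min t (1 - t) * u s"
      using t(1) s nonneg by (intro mult_right_mono) auto
    also have "\<dots> \<le> u t"
      using concave_nonneg_min_dist_mult_le[OF conc nonneg _ s] t(1) \<theta> by auto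
    finally show ?thesis .
  qed
  then have "norm1 u \<le> u t / \<theta>"
    using nonneg \<theta> by (intro norm1_le) (simp add: le_divide_eq mult.commute)
  then show "\<theta> * norm1 u \<le> v"
    using t(2) \<theta> by (simp add: le_divide_eq mult.commute)
qed

lemma gamma_le_theta:
  assumes "0 < \<alpha>" "0 < \<beta>" "0 < \<theta>" "\<theta> < 1"
    and D_pos: "0 < (1 - \<alpha> * \<eta>) - \<beta> * (1 - \<eta>)"
  shows "gamma \<eta> \<alpha> \<beta> \<theta> \<le> \<theta>"
proof -
  define D where "D = (1 - \<alpha> * \<eta>) - \<beta> * (1 - \<eta>)"
  have "0 < D"
    using D_pos by (simp add: D_def)
  have "\<beta> + min ((\<alpha> - \<beta>) * \<theta>) ((\<alpha> - \<beta>) * (1 - \<theta>)) \<le> max \<alpha> \<beta>"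
  proof (cases "\<alpha> \<le> \<beta>")
    case True
    then have "(\<alpha> - \<beta>) * (1 - \<theta>) \<le> 0" using assms(4) by (simp add: mult_nonpos_nonneg)
    then show ?thesis using True by linarith
  next
    case False
    then have "(\<alpha> - \<beta>) * \<theta> \<le> \<alpha> - \<beta>" using assms(4) by (simp add: mult_le_cancel_left1)
    then show ?thesis using False by linarith
  qed
  then have "k2 \<eta> \<alpha> \<beta> \<theta> \<le> \<theta> * k1 \<eta> \<alpha> \<beta>"
    unfolding k2_def k1_def D_def[symmetric]
    using \<open>0 < D\<close> assms(3) by (intro mult_left_mono add_left_mono divide_right_mono) auto
  moreover have "0 < max \<alpha> \<beta> / D"
    using \<open>0 < D\<close> assms(1,2) by (intro divide_pos_pos) (auto simp: less_max_iff_disj)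
  then have "0 < k1 \<eta> \<alpha> \<beta>"
    by (simp add: k1_def D_def)
  ultimately show ?thesis by (simp add: gamma_def divide_le_eq)
qed

theorem lemma2p5:
  fixes \<eta> \<alpha> \<beta> \<theta> :: real and y u u' :: "real \<Rightarrow> real"
  assumes "0 < \<eta>" "\<eta> < 1"
    and "0 < \<alpha>" "\<alpha> < 1 / \<eta>"
    and "0 < \<beta>" "\<beta> < (1 - \<alpha> * \<eta>) / (1 - \<eta>)"
    and "0 < \<theta>" "\<theta> < 1 / 2"
    and "continuous_on {0..1} y" "\<forall>t\<in>{0..1}. y t \<ge> 0"
    and "\<forall>t\<in>{0..1}. (u has_real_derivative u' t) (at t within {0..1})"
    and "\<forall>t\<in>{0..1}. (u' has_real_derivative (- y t)) (at t within {0..1})"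
    and "u 0 = \<beta> * u \<eta>" "u 1 = \<alpha> * u \<eta>"
  shows "Inf (u ` {\<theta>..1 - \<theta>}) \<ge> gamma \<eta> \<alpha> \<beta> \<theta> * norm1 u"
proof -
  have D_pos: "0 < (1 - \<alpha> * \<eta>) - \<beta> * (1 - \<eta>)"
    using assms(2,6) by (simp add: field_simps)
  have "antimono_on {0..1} u'"
    using assms(10,12) by (intro antimono_on_if_derivative_nonpos[of _ _ _ "\<lambda>t. - y t"]) auto
  then have conc: "concave_on {0..1} u"
    using assms(11) by (rule concave_on_if_antimono_derivative[rotated])
  have nonneg: "\<forall>t\<in>{0..1}. 0 \<le> u t"
    using assms(1-3,5,13,14) D_pos by (intro concave_on_bvp_nonneg[OF conc]) auto
  have "0 \<le> norm1 u"
    using assms(11) by (intro norm1_nonneg DERIV_continuous_on) auto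
  then have "gamma \<eta> \<alpha> \<beta> \<theta> * norm1 u \<le> \<theta> * norm1 u"
    using gamma_le_theta[OF assms(3,5,7) _ D_pos] assms(8) by (intro mult_right_mono) auto
  also have "\<dots> \<le> Inf (u ` {\<theta>..1 - \<theta>})"
    using concave_nonneg_Inf_middle_ge_norm1[OF conc nonneg] assms(7,8) by simp
  finally show ?thesis .
qed

end
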